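(* Let $(\mathbb{T},G)$ be a minimal equicontinuous topological dynamical system, $\theta_0\in\mathbb{T}$, and $f$ a $K$-valued semicocycle over $(\mathbb{T},G,\theta_0)$. Let $[\theta]$ denote the $\sim$-class of $\theta$ and equip $\mathbb{T}/\!\sim$ with the induced action $g[\theta]=[g\theta]$. Then $(\mathbb{T}/\!\sim,G,[\theta_0])$ is a pointed minimal equicontinuous system, the map $\tilde f\colon G[\theta_0]\to K$, $g[\theta_0]\mapsto f(g\theta_0)$, is a well-defined $K$-valued semicocycle over $(\mathbb{T}/\!\sim,G,[\theta_0])$ which is invariant under no rotation, and $X_{\tilde f}=X_f$. In particular, $(X_f,G)$ is a semicocycle extension of $(\mathbb{T}/\!\sim,G)$.
   Context: $G$ is a topological group acting jointly continuously on a compact Hausdorff space; minimal means all orbits dense; equicontinuous means the family of translations is equicontinuous. $E(\mathbb{T})$ is the Ellis semigroup (closure of $\{\theta\mapsto g\theta\}$ in $\mathbb{T}^{\mathbb{T}}$, pointwise topology). $K$ is compact Hausdorff. A pointed system $(\mathbb{T},G,\theta_0)$ has $\overline{G\theta_0}=\mathbb{T}$; a $K$-valued semicocycle over it is a continuous $f\colon G\theta_0\to K$. $F=\overline{\operatorname{gr} f}\subseteq\mathbb{T}\times K$, $F(\theta)=\{k:(\theta,k)\in F\}$. Relation: $\theta_1\sim\theta_2$ iff $F(\xi\theta_1)=F(\xi\theta_2)$ for all $\xi\in E(\mathbb{T})$ (the analogous relation is defined for $\tilde f$ over $\mathbb{T}/\!\sim$ using $E(\mathbb{T}/\!\sim)$);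 $f$ is invariant under no rotation if $\sim$ is the identity. $G$ acts on $K^G$ (product topology) by $\sigma^h((x_g)_{g\in G})=(x_{gh})_{g\in G}$. Identifying $f$ with $(f(g\theta_0))_{g\in G}\in K^G$, $X_f$ is the closure of $\{\sigma^h f:h\in G\}$ in $K^G$, and $(X_f,G)$ carries the shift action. If $(\mathbb{T},G)$ is minimal equicontinuous and $f$ is invariant under no rotation, $(X_f,G)$ is called a semicocycle extension of $(\mathbb{T},G)$. *)

theory Defs
  imports "HOL-Analysis.Analysis"
begin

text \<open>Group G: a type of class topological_group_add (written additively, not
necessarily commutative), with its canonical topology euclidean.
Action: act g x, with act (g + h) x = act g (act h x).\<close>

definition tds :: "'a topology \<Rightarrow> ('g::topological_group_add \<Rightarrow> 'a \<Rightarrow> 'a) \<Rightarrow> bool" where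
  "tds X act \<longleftrightarrow> compact_space X \<and> Hausdorff_space X
     \<and> (\<forall>g x. x \<in> topspace X \<longrightarrow> act g x \<in> topspace X)
     \<and> (\<forall>x\<in>topspace X. act 0 x = x)
     \<and> (\<forall>g h x. x \<in> topspace X \<longrightarrow> act (g + h) x = act g (act h x))
     \<and> continuous_map (prod_topology euclidean X) X (\<lambda>(g, x). act g x)"

definition orbit :: "('g \<Rightarrow> 'a \<Rightarrow> 'a) \<Rightarrow> 'a \<Rightarrow> 'a set" where
  "orbit act x = range (\<lambda>g. act g x)"

definition minimal_action :: "'a topology \<Rightarrow> ('g \<Rightarrow> 'a \<Rightarrow> 'a) \<Rightarrow> bool" where
  "minimal_action X act \<longleftrightarrow> (\<forall>x\<in>topspace X. X closure_of orbit act x = topspace X)"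

text \<open>Equicontinuity w.r.t. the unique uniformity of a compact Hausdorff space,
whose entourages are the neighbourhoods of the diagonal.\<close>
definition equicontinuous_action :: "'a topology \<Rightarrow> ('g \<Rightarrow> 'a \<Rightarrow> 'a) \<Rightarrow> bool" where
  "equicontinuous_action X act \<longleftrightarrow>
     (\<forall>U. openin (prod_topology X X) U \<and> (\<forall>x\<in>topspace X. (x, x) \<in> U) \<longrightarrow>
        (\<exists>V. openin (prod_topology X X) V \<and> (\<forall>x\<in>topspace X. (x, x) \<in> V) \<and>
             (\<forall>g x y. (x, y) \<in> V \<longrightarrow> (act g x, act g y) \<in> U)))"

definition ellis :: "'a topology \<Rightarrow> ('g \<Rightarrow> 'a \<Rightarrow> 'a) \<Rightarrow> ('a \<Rightarrow> 'a) set" where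
  "ellis X act = (product_topology (\<lambda>_. X) (topspace X)) closure_of
                  {restrict (act g) (topspace X) | g. True}"

definition semicocycle ::
  "'a topology \<Rightarrow> 'k topology \<Rightarrow> ('g \<Rightarrow> 'a \<Rightarrow> 'a) \<Rightarrow> 'a \<Rightarrow> ('a \<Rightarrow> 'k) \<Rightarrow> bool" where
  "semicocycle X K act x0 f \<longleftrightarrow> x0 \<in> topspace X \<and> X closure_of orbit act x0 = topspace X
     \<and> continuous_map (subtopology X (orbit act x0)) K f"

definition graph_closure ::
  "'a topology \<Rightarrow> 'k topology \<Rightarrow> ('g \<Rightarrow> 'a \<Rightarrow> 'a) \<Rightarrow> 'a \<Rightarrow> ('a \<Rightarrow> 'k) \<Rightarrow> ('a \<times> 'k) set" where
  "graph_closure X K act x0 f = (prod_topology X K) closure_of ((\<lambda>x. (x, f x)) ` orbit act x0)"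

definition fiber :: "('a \<times> 'k) set \<Rightarrow> 'a \<Rightarrow> 'k set" where
  "fiber F x = {k. (x, k) \<in> F}"

definition sc_rel ::
  "'a topology \<Rightarrow> 'k topology \<Rightarrow> ('g \<Rightarrow> 'a \<Rightarrow> 'a) \<Rightarrow> 'a \<Rightarrow> ('a \<Rightarrow> 'k) \<Rightarrow> ('a \<times> 'a) set" where
  "sc_rel X K act x0 f = {(a, b). a \<in> topspace X \<and> b \<in> topspace X \<and>
      (\<forall>\<xi>\<in>ellis X act. fiber (graph_closure X K act x0 f) (\<xi> a)
                        = fiber (graph_closure X K act x0 f) (\<xi> b))}"

definition no_rotation ::
  "'a topology \<Rightarrow> 'k topology \<Rightarrow> ('g \<Rightarrow> 'a \<Rightarrow> 'a) \<Rightarrow> 'a \<Rightarrow> ('a \<Rightarrow> 'k) \<Rightarrow> bool" where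
  "no_rotation X K act x0 f \<longleftrightarrow> sc_rel X K act x0 f = Id_on (topspace X)"

definition quotient_topology :: "'a topology \<Rightarrow> ('a \<times> 'a) set \<Rightarrow> 'a set topology" where
  "quotient_topology X R = topology (\<lambda>U. U \<subseteq> topspace X // R \<and> openin X (\<Union>U))"

definition quotient_action :: "('a \<times> 'a) set \<Rightarrow> ('g \<Rightarrow> 'a \<Rightarrow> 'a) \<Rightarrow> 'g \<Rightarrow> 'a set \<Rightarrow> 'a set" where
  "quotient_action R act g c = (\<Union>x\<in>c. R `` {act g x})"

definition shift_orbit_closure :: "'k topology \<Rightarrow> ('g::group_add \<Rightarrow> 'k) \<Rightarrow> ('g \<Rightarrow> 'k) set" where
  "shift_orbit_closure K x = (product_topology (\<lambda>_. K) UNIV) closure_of {(\<lambda>g. x (g + h)) | h. True}"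

end

theory Submission
  imports Defs
begin

text \<open>For an equicontinuous action the Ellis semigroup matters only through its values at pairs
  of points, which form the orbit closure of the pair under the diagonal action on \<open>X \<times> X\<close>.
  That action is again equicontinuous, so its orbit closures are minimal and depend continuously
  on the point. Hence \<open>\<sim>\<close> consists of the pairs along whose pair orbit closure the fibres of
  \<open>F\<close> agree; it is an invariant equivalence relation, and it is closed: a limit of related pairs
  can be replaced, using minimality, by one with fixed first coordinate, and along such limits
  fibre inclusion persists because \<open>F\<close> is closed.
  A compact Hausdorff equicontinuous system modulo a closed invariant equivalence relation is
  again one. Related points have equal fibres, which are singletons on the orbit of \<open>\<theta>\<^sub>0\<close>, so
  \<open>f\<close> descends to the classes; the fibres of the new graph closure are those of \<open>F\<close>, so the new
  relation is trivial.\<close>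

lemma image_closure_of_compact:
  assumes "continuous_map Y Z h" "compact_space Y" "Hausdorff_space Z" "S \<subseteq> topspace Y"
  shows "h ` (Y closure_of S) = Z closure_of (h ` S)"
proof
  show "h ` (Y closure_of S) \<subseteq> Z closure_of h ` S"
    by (rule continuous_map_image_closure_subset[OF assms(1)])
  have "closed_map Y Z h"
    using continuous_imp_closed_map assms by blast
  then show "Z closure_of h ` S \<subseteq> h ` (Y closure_of S)"
    using assms(4) unfolding closed_map_closure_of_image by blast
qed

lemma openin_prod_topologyE:
  assumes "openin (prod_topology X Y) N" "(x, y) \<in> N"
  obtains U V where "openin X U" "openin Y V" "x \<in> U" "y \<in> V" "U \<times> V \<subseteq> N"
  using assms unfolding openin_prod_topology_alt by metis

definition entourage :: "'a topology \<Rightarrow> ('a \<times> 'a) set \<Rightarrow> bool" where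
  "entourage X U \<longleftrightarrow> openin (prod_topology X X) U \<and> (\<forall>x\<in>topspace X. (x, x) \<in> U)"

lemma equicontinuous_actionE:
  assumes "equicontinuous_action X act" "entourage X U"
  obtains V where "entourage X V" "\<And>g x y. (x, y) \<in> V \<Longrightarrow> (act g x, act g y) \<in> U"
  using assms(1)[unfolded equicontinuous_action_def, rule_format, OF assms(2)[unfolded entourage_def]]
    that unfolding entourage_def by blast

lemma entourage_avoiding:
  assumes "closedin X C" "openin X A" "C \<subseteq> A"
  shows "entourage X (topspace X \<times> topspace X - C \<times> (topspace X - A))"
proof -
  have "closedin (prod_topology X X) (C \<times> (topspace X - A))"
    using assms(1) closedin_diff[OF closedin_topspace assms(2)] by (simp add: closedin_prod_Times_iff)
  then have "openin (prod_topology X X) (topspace (prod_topology X X) - C \<times> (topspace X - A))"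
    by (rule openin_diff[OF openin_topspace])
  then show ?thesis
    unfolding entourage_def topspace_prod_topology using assms(3) by blast
qed

lemma entourage_closure_subset:
  assumes "compact_space X" "Hausdorff_space X" "entourage X U"
  obtains V where "entourage X V" "prod_topology X X closure_of V \<subseteq> U"
proof -
  have "normal_space (prod_topology X X)"
    by (rule compact_Hausdorff_or_regular_imp_normal_space)
      (use assms(1,2) in \<open>auto simp: compact_space_prod_topology Hausdorff_space_prod_topology\<close>)
  moreover have "closedin (prod_topology X X) ((\<lambda>x. (x, x)) ` topspace X)"
    using assms(2) Hausdorff_space_closedin_diagonal by blast
  moreover have "openin (prod_topology X X) U \<and> (\<lambda>x. (x, x)) ` topspace X \<subseteq> U"
    using assms(3) unfolding entourage_def by auto
  ultimately obtain V where "openin (prod_topology X X) V" "(\<lambda>x. (x, x)) ` topspace X \<subseteq> V"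
      "prod_topology X X closure_of V \<subseteq> U"
    using normal_space_alt[THEN iffD1, rule_format] by (metis (no_types, lifting))
  then show thesis
    using that unfolding entourage_def by (auto simp: image_subset_iff)
qed

lemma entourage_closure_avoiding:
  assumes "compact_space X" "Hausdorff_space X" "openin X A" "z \<in> A"
  obtains W U where "openin X W" "z \<in> W" "entourage X U"
    "\<And>s t. (s, t) \<in> prod_topology X X closure_of U \<Longrightarrow> s \<in> W \<Longrightarrow> t \<in> A"
proof -
  have "normal_space X"
    using assms(1,2) compact_Hausdorff_or_regular_imp_normal_space by blast
  moreover have "closedin X {z}"
    using assms(3,4) openin_subset by (blast intro: closedin_Hausdorff_singleton[OF assms(2)])
  moreover have "openin X A \<and> {z} \<subseteq> A"
    using assms(3,4) by blast
  ultimately obtain W where W: "openin X W" "{z} \<subseteq> W" "X closure_of W \<subseteq> A"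
    using normal_space_alt[THEN iffD1, rule_format] by (metis (no_types, lifting))
  let ?U0 = "topspace X \<times> topspace X - (X closure_of W) \<times> (topspace X - A)"
  have "entourage X ?U0"
    using entourage_avoiding[OF closedin_closure_of assms(3) W(3)] .
  then obtain U where U: "entourage X U" "prod_topology X X closure_of U \<subseteq> ?U0"
    using entourage_closure_subset assms(1,2) by blast
  show thesis
  proof (rule that[OF W(1) _ U(1)])
    show "z \<in> W" using W(2) by blast
  next
    fix s t assume st: "(s, t) \<in> prod_topology X X closure_of U" "s \<in> W"
    then have "(s, t) \<in> ?U0"
      using U(2) by blast
    moreover have "s \<in> X closure_of W"
      using closure_of_subset[OF openin_subset[OF W(1)]] st(2) by blast
    ultimately show "t \<in> A"
      by blast
  qed
qed

section \<open>Orbit closures of equicontinuous actions\<close>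

definition transpose_pairs :: "('a \<times> 'b) \<times> ('c \<times> 'd) \<Rightarrow> ('a \<times> 'c) \<times> ('b \<times> 'd)" where
  "transpose_pairs = (\<lambda>((x, y), (x', y')). ((x, x'), (y, y')))"

lemma transpose_pairs_simp [simp]: "transpose_pairs ((x, y), (x', y')) = ((x, x'), (y, y'))"
  by (simp add: transpose_pairs_def)

lemma continuous_map_transpose_pairs:
  "continuous_map (prod_topology (prod_topology X Y) (prod_topology X' Y'))
     (prod_topology (prod_topology X X') (prod_topology Y Y')) transpose_pairs"
  unfolding transpose_pairs_def case_prod_unfold
  by (simp add: continuous_map_paired continuous_map_of_fst[unfolded o_def]
      continuous_map_of_snd[unfolded o_def] continuous_map_fst continuous_map_snd)

definition orbit_closure :: "'a topology \<Rightarrow> ('g \<Rightarrow> 'a \<Rightarrow> 'a) \<Rightarrow> 'a \<Rightarrow> 'a set" where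
  "orbit_closure X act x = X closure_of orbit act x"

locale equicontinuous_system =
  fixes X :: "'a topology" and act :: "'g::group_add \<Rightarrow> 'a \<Rightarrow> 'a"
  assumes compact: "compact_space X" and Hausdorff: "Hausdorff_space X"
    and act_in_topspace: "x \<in> topspace X \<Longrightarrow> act g x \<in> topspace X"
    and act_zero: "x \<in> topspace X \<Longrightarrow> act 0 x = x"
    and act_add: "x \<in> topspace X \<Longrightarrow> act (g + h) x = act g (act h x)"
    and continuous_map_act: "continuous_map X X (act g)"
    and equicontinuous: "equicontinuous_action X act"
begin

lemma act_neg_act: "x \<in> topspace X \<Longrightarrow> act (- g) (act g x) = x"
  by (metis act_add act_zero add.left_inverse)

lemma orbit_subset_topspace: "x \<in> topspace X \<Longrightarrow> orbit act x \<subseteq> topspace X"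
  unfolding orbit_def using act_in_topspace by blast

lemma compact_prod: "compact_space (prod_topology X X)"
  using compact by (simp add: compact_space_prod_topology)

lemma Hausdorff_prod: "Hausdorff_space (prod_topology X X)"
  using Hausdorff by (simp add: Hausdorff_space_prod_topology)

lemma closedin_orbit_closure: "closedin X (orbit_closure X act x)"
  unfolding orbit_closure_def by simp

lemma orbit_closure_subset_topspace: "orbit_closure X act x \<subseteq> topspace X"
  unfolding orbit_closure_def by (rule closure_of_subset_topspace)

lemma mem_orbit_closure_self: "x \<in> topspace X \<Longrightarrow> x \<in> orbit_closure X act x"
proof -
  assume x: "x \<in> topspace X"
  then have "x \<in> orbit act x"
    unfolding orbit_def by (auto simp: act_zero intro!: image_eqI[where x=0])
  then show ?thesis
    unfolding orbit_closure_def using closure_of_subset[OF orbit_subset_topspace[OF x]] by blast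
qed

lemma act_mem_orbit_closure:
  assumes "x \<in> topspace X" "y \<in> orbit_closure X act x"
  shows "act g y \<in> orbit_closure X act x"
proof -
  have "act g ` orbit act x \<subseteq> orbit act x"
    unfolding orbit_def using assms(1) by (auto simp: act_add[symmetric])
  then have "act g ` orbit_closure X act x \<subseteq> orbit_closure X act x"
    unfolding orbit_closure_def
    by (meson closure_of_mono continuous_map_act continuous_map_image_closure_subset order_trans)
  then show ?thesis
    using assms(2) by blast
qed

lemma orbit_closure_subset_of_mem:
  assumes "x \<in> topspace X" "y \<in> orbit_closure X act x"
  shows "orbit_closure X act y \<subseteq> orbit_closure X act x"
  unfolding orbit_closure_def[of X act y]
proof (rule closure_of_minimal[OF _ closedin_orbit_closure])
  show "orbit act y \<subseteq> orbit_closure X act x"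
    unfolding orbit_def using act_mem_orbit_closure[OF assms] by blast
qed

text \<open>Equicontinuity makes orbit closures minimal: from a point of the orbit closure of \<open>x\<close>
  one returns arbitrarily close to \<open>x\<close>.\<close>
lemma mem_orbit_closure_sym:
  assumes "x \<in> topspace X" "y \<in> orbit_closure X act x"
  shows "x \<in> orbit_closure X act y"
  unfolding orbit_closure_def in_closure_of
proof (intro conjI allI impI)
  show "x \<in> topspace X" by fact
  fix N assume N: "x \<in> N \<and> openin X N"
  have "closedin X {x}"
    using assms(1) Hausdorff by (simp add: closedin_Hausdorff_singleton)
  then have U: "entourage X (topspace X \<times> topspace X - {x} \<times> (topspace X - N))"
    using N by (intro entourage_avoiding) auto
  obtain V where V: "entourage X V"
    and VU: "\<And>g s t. (s, t) \<in> V \<Longrightarrow>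
           (act g s, act g t) \<in> topspace X \<times> topspace X - {x} \<times> (topspace X - N)"
    using equicontinuous_actionE[OF equicontinuous U] by blast
  have yT: "y \<in> topspace X"
    using assms(2) orbit_closure_subset_topspace by blast
  then have "(y, y) \<in> V"
    using V unfolding entourage_def by blast
  then obtain P P' where P: "openin X P" "y \<in> P" "P \<times> P' \<subseteq> V" "y \<in> P'"
    using V unfolding entourage_def by (metis openin_prod_topologyE)
  obtain h where "act h x \<in> P"
    using assms(2) P(1,2) unfolding orbit_closure_def in_closure_of orbit_def by blast
  then have "(act h x, y) \<in> V"
    using P(3,4) by blast
  then have "act (- h) y \<in> N"
    using VU[of "act h x" y "- h"] act_neg_act[OF assms(1)] by blast
  then show "\<exists>z. z \<in> orbit act y \<and> z \<in> N"
    unfolding orbit_def by blast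
qed

lemma orbit_closure_eq_of_mem:
  assumes "x \<in> topspace X" "y \<in> orbit_closure X act x"
  shows "orbit_closure X act y = orbit_closure X act x"
  using assms mem_orbit_closure_sym orbit_closure_subset_of_mem orbit_closure_subset_topspace
  by (meson subset_antisym subsetD)

lemma orbit_closure_transfer:
  assumes "x \<in> topspace X" "x' \<in> topspace X" "closedin (prod_topology X X) C"
    and "\<And>g. (act g x, act g x') \<in> C" and "y \<in> orbit_closure X act x"
  obtains y' where "y' \<in> orbit_closure X act x'" "(y, y') \<in> C"
proof -
  let ?S = "range (\<lambda>g. (act g x, act g x'))"
  have S: "?S \<subseteq> topspace (prod_topology X X)"
    using act_in_topspace assms(1,2) by auto
  have "fst ` (prod_topology X X closure_of ?S) = X closure_of (fst ` ?S)"
    by (rule image_closure_of_compact[OF continuous_map_fst compact_prod Hausdorff S])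
  moreover have "fst ` ?S = orbit act x" "snd ` ?S = orbit act x'"
    unfolding orbit_def by (simp_all add: image_image)
  ultimately have "y \<in> fst ` (prod_topology X X closure_of ?S)"
    using assms(5) unfolding orbit_closure_def by simp
  then obtain y' where y': "(y, y') \<in> prod_topology X X closure_of ?S"
    by force
  have "snd ` (prod_topology X X closure_of ?S) \<subseteq> X closure_of (snd ` ?S)"
    by (rule continuous_map_image_closure_subset[OF continuous_map_snd])
  then have "y' \<in> orbit_closure X act x'"
    using y' \<open>snd ` ?S = orbit act x'\<close> unfolding orbit_closure_def by force
  moreover have "(y, y') \<in> C"
    using closure_of_minimal[of ?S C] assms(3,4) y' by blast
  ultimately show thesis
    by (rule that)
qed

lemma closedin_orbit_closure_relation:
  "closedin (prod_topology X X) {(x, y). x \<in> topspace X \<and> y \<in> orbit_closure X act x}"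
  (is "closedin _ ?D")
proof -
  have "openin (prod_topology X X) (topspace (prod_topology X X) - ?D)"
  proof (subst openin_subopen, intro ballI)
    fix w assume w: "w \<in> topspace (prod_topology X X) - ?D"
    then obtain x y where xy: "w = (x, y)" "x \<in> topspace X" "y \<in> topspace X"
      and y: "y \<notin> orbit_closure X act x"
      by auto
    have "openin X (topspace X - orbit_closure X act x)"
      using closedin_orbit_closure by (simp add: openin_diff)
    then obtain W U where W: "openin X W" "y \<in> W" and U: "entourage X U"
      and WU: "\<And>s t. (s, t) \<in> prod_topology X X closure_of U \<Longrightarrow> s \<in> W \<Longrightarrow>
                 t \<in> topspace X - orbit_closure X act x"
      using entourage_closure_avoiding[OF compact Hausdorff] xy y by blast
    obtain V where V: "entourage X V" and VU: "\<And>g s t. (s, t) \<in> V \<Longrightarrow> (act g s, act g t) \<in> U"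
      using equicontinuous_actionE[OF equicontinuous U] by blast
    have "(x, x) \<in> V"
      using V xy unfolding entourage_def by blast
    then obtain P P' where P: "openin X P" "x \<in> P" "x \<in> P'" "P \<times> P' \<subseteq> V"
      using V unfolding entourage_def by (metis openin_prod_topologyE)
    have "P \<times> W \<subseteq> topspace (prod_topology X X) - ?D"
    proof clarify
      fix x' y' assume x'y': "x' \<in> P" "y' \<in> W"
      have x'T: "x' \<in> topspace X" "y' \<in> topspace X"
        using x'y' P(1) W(1) openin_subset by blast+
      moreover have "y' \<notin> orbit_closure X act x'"
      proof
        assume "y' \<in> orbit_closure X act x'"
        moreover have "\<And>g. (act g x', act g x) \<in> prod_topology X X closure_of U"
          using VU P(3,4) x'y'(1) closure_of_subset[OF openin_subset] U
          unfolding entourage_def by blast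
        ultimately obtain y'' where "(y', y'') \<in> prod_topology X X closure_of U"
          "y'' \<in> orbit_closure X act x"
          using orbit_closure_transfer[OF x'T(1) xy(2) closedin_closure_of] by blast
        then show False
          using WU x'y'(2) by blast
      qed
      ultimately show "(x', y') \<in> topspace (prod_topology X X) - ?D"
        by simp
    qed
    moreover have "openin (prod_topology X X) (P \<times> W)"
      using P(1) W(1) by (simp add: openin_prod_Times_iff)
    ultimately show "\<exists>N. openin (prod_topology X X) N \<and> w \<in> N \<and>
        N \<subseteq> topspace (prod_topology X X) - ?D"
      using xy P(2) W(2) by blast
  qed
  moreover have "?D \<subseteq> topspace (prod_topology X X)"
    using orbit_closure_subset_topspace by auto
  ultimately show ?thesis
    by (simp add: closedin_def)
qed

text \<open>Equicontinuity passes to the diagonal action on \<open>X \<times> X\<close>: by Wallace's theorem an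
  entourage of \<open>X \<times> X\<close> contains all pairs whose coordinates are close for one entourage of \<open>X\<close>.\<close>
lemma equicontinuous_action_pairs:
  "equicontinuous_action (prod_topology X X) (\<lambda>g. map_prod (act g) (act g))"
  unfolding equicontinuous_action_def
proof (intro allI impI)
  let ?XX = "prod_topology X X"
  let ?\<Delta> = "(\<lambda>x. (x, x)) ` topspace X"
  fix U assume U: "openin (prod_topology ?XX ?XX) U \<and> (\<forall>z\<in>topspace ?XX. (z, z) \<in> U)"
  let ?W = "{p \<in> topspace (prod_topology ?XX ?XX). transpose_pairs p \<in> U}"
  have W: "openin (prod_topology ?XX ?XX) ?W"
    using openin_continuous_map_preimage[OF continuous_map_transpose_pairs] U by blast
  have \<Delta>: "compactin ?XX ?\<Delta>"
    by (rule image_compactin[OF compact[unfolded compact_space_def]]) (intro continuous_intros)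
  have "?\<Delta> \<times> ?\<Delta> \<subseteq> ?W"
    using U by auto
  then obtain A B where AB: "openin ?XX A" "openin ?XX B" "?\<Delta> \<subseteq> A" "?\<Delta> \<subseteq> B"
    "A \<times> B \<subseteq> ?W"
    by (rule Wallace_theorem_prod_topology[OF \<Delta> \<Delta> W])
  then have "entourage X (A \<inter> B)"
    unfolding entourage_def by (auto intro: openin_Int)
  then obtain V where V: "entourage X V"
    and VAB: "\<And>g x y. (x, y) \<in> V \<Longrightarrow> (act g x, act g y) \<in> A \<inter> B"
    using equicontinuous_actionE[OF equicontinuous] by blast
  let ?V = "{p \<in> topspace (prod_topology ?XX ?XX). transpose_pairs p \<in> V \<times> V}"
  show "\<exists>V'. openin (prod_topology ?XX ?XX) V' \<and> (\<forall>z\<in>topspace ?XX. (z, z) \<in> V') \<and>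
      (\<forall>g z z'. (z, z') \<in> V' \<longrightarrow> (map_prod (act g) (act g) z, map_prod (act g) (act g) z') \<in> U)"
  proof (intro exI conjI ballI allI impI)
    show "openin (prod_topology ?XX ?XX) ?V"
      using V unfolding entourage_def
      by (intro openin_continuous_map_preimage[OF continuous_map_transpose_pairs])
        (simp add: openin_prod_Times_iff)
    show "(z, z) \<in> ?V" if "z \<in> topspace ?XX" for z
      using that V unfolding entourage_def by (cases z) auto
    fix g z z' assume "(z, z') \<in> ?V"
    then have "((act g (fst z), act g (fst z')), (act g (snd z), act g (snd z'))) \<in> A \<times> B"
      using VAB by (cases z, cases z') auto
    then show "(map_prod (act g) (act g) z, map_prod (act g) (act g) z') \<in> U"
      using AB(5) by (cases z, cases z') auto
  qed
qed

text \<open>A closed invariant relation \<open>R\<close> inside an open set \<open>U\<close> has a neighbourhood that the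
  whole group keeps inside \<open>U\<close>: Wallace's theorem gives an entourage \<open>E\<close> with
  \<open>E\<inverse> O R O E \<subseteq> U\<close>, and equicontinuity makes \<open>E\<close> uniform in \<open>g\<close>.\<close>
lemma invariant_relation_uniform_nbhd:
  assumes R: "closedin (prod_topology X X) R" "\<And>g x y. (x, y) \<in> R \<Longrightarrow> (act g x, act g y) \<in> R"
    and U: "openin (prod_topology X X) U" "R \<subseteq> U"
  obtains N where "openin (prod_topology X X) N" "R \<subseteq> N"
    "\<And>g x y. (x, y) \<in> N \<Longrightarrow> (act g x, act g y) \<in> U"
proof -
  let ?XX = "prod_topology X X"
  let ?\<Delta> = "(\<lambda>x. (x, x)) ` topspace X"
  let ?B = "{w \<in> topspace (prod_topology ?XX ?XX). transpose_pairs w \<in> R \<times> (topspace ?XX - U)}"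
  have "closedin (prod_topology ?XX ?XX) ?B"
    using R(1) U(1)
    by (intro closedin_continuous_map_preimage[OF continuous_map_transpose_pairs])
      (simp add: closedin_prod_Times_iff closedin_diff)
  then have W: "openin (prod_topology ?XX ?XX) (topspace (prod_topology ?XX ?XX) - ?B)"
    by (rule openin_diff[OF openin_topspace])
  have \<Delta>: "compactin ?XX ?\<Delta>"
    by (rule image_compactin[OF compact[unfolded compact_space_def]]) (intro continuous_intros)
  have "?\<Delta> \<times> ?\<Delta> \<subseteq> topspace (prod_topology ?XX ?XX) - ?B"
    using U(2) by auto
  then obtain A B where AB: "openin ?XX A" "openin ?XX B" "?\<Delta> \<subseteq> A" "?\<Delta> \<subseteq> B"
    "A \<times> B \<subseteq> topspace (prod_topology ?XX ?XX) - ?B"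
    by (rule Wallace_theorem_prod_topology[OF \<Delta> \<Delta> W])
  then have "entourage X (A \<inter> B)"
    unfolding entourage_def by (auto intro: openin_Int)
  then obtain V where V: "entourage X V"
    and VAB: "\<And>g x y. (x, y) \<in> V \<Longrightarrow> (act g x, act g y) \<in> A \<inter> B"
    using equicontinuous_actionE[OF equicontinuous] by blast
  let ?slice = "\<lambda>x. {y \<in> topspace X. (x, y) \<in> V}"
  let ?N = "\<Union>(x, y) \<in> R. ?slice x \<times> ?slice y"
  have slice: "openin X (?slice x)" if "x \<in> topspace X" for x
    using V that unfolding entourage_def
    by (intro openin_continuous_map_preimage[where Y="?XX"]) (auto intro!: continuous_intros)
  show thesis
  proof
    show "openin ?XX ?N"
      using closedin_subset[OF R(1)] slice by (auto simp: openin_prod_Times_iff intro!: openin_Union)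
    show "R \<subseteq> ?N"
      using closedin_subset[OF R(1)] V unfolding entourage_def by fastforce
    fix g x' y' assume "(x', y') \<in> ?N"
    then obtain x y where xy: "(x, y) \<in> R" "(x, x') \<in> V" "(y, y') \<in> V"
      by blast
    then have "((act g x, act g x'), (act g y, act g y')) \<in> A \<times> B"
      using VAB by blast
    then have "((act g x, act g x'), (act g y, act g y')) \<in> topspace (prod_topology ?XX ?XX) - ?B"
      by (rule subsetD[OF AB(5)])
    moreover have "(act g x, act g y) \<in> R"
      using R(2) xy(1) by blast
    ultimately show "(act g x', act g y') \<in> U"
      by auto
  qed
qed

end

lemma equicontinuous_system_pairs:
  assumes "equicontinuous_system X act"
  shows "equicontinuous_system (prod_topology X X) (\<lambda>g. map_prod (act g) (act g))"
proof -
  interpret equicontinuous_system X act by fact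
  have "continuous_map (prod_topology X X) (prod_topology X X) (map_prod (act g) (act g))" for g
    by (simp add: map_prod_def continuous_map_prod_top continuous_map_act)
  then show ?thesis
    by unfold_locales
      (auto simp: compact_prod Hausdorff_prod act_in_topspace act_zero act_add
        equicontinuous_action_pairs)
qed

lemma tds_imp_equicontinuous_system:
  assumes "tds X act" "equicontinuous_action X act"
  shows "equicontinuous_system X act"
proof -
  have joint: "continuous_map (prod_topology euclidean X) X (\<lambda>(g, x). act g x)"
    using assms(1) unfolding tds_def by blast
  have "continuous_map X X (act g)" for g
    using continuous_map_compose[OF continuous_map_pairedI[OF continuous_map_const[THEN iffD2]
          continuous_map_id] joint]
    by (simp add: o_def)
  then show ?thesis
    using assms unfolding tds_def by unfold_locales auto
qed

section \<open>The relation of a semicocycle\<close>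

text \<open>Evaluating the Ellis semigroup at two points gives the orbit closure of the pair: the
  evaluation map is continuous on the compact space \<open>X\<^sup>X\<close> and so maps closures onto closures.\<close>
lemma ellis_image_pair:
  assumes "compact_space X" "Hausdorff_space X"
    and "\<And>g x. x \<in> topspace X \<Longrightarrow> act g x \<in> topspace X"
    and "a \<in> topspace X" "b \<in> topspace X"
  shows "(\<lambda>\<xi>. (\<xi> a, \<xi> b)) ` ellis X act
      = orbit_closure (prod_topology X X) (\<lambda>g. map_prod (act g) (act g)) (a, b)"
proof -
  let ?P = "product_topology (\<lambda>_. X) (topspace X)"
  let ?S = "{restrict (act g) (topspace X) | g. True}"
  have "continuous_map ?P (prod_topology X X) (\<lambda>\<xi>. (\<xi> a, \<xi> b))"
    by (intro continuous_map_pairedI continuous_map_product_projection assms)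
  moreover have "compact_space ?P"
    using assms(1) by (simp add: compact_space_product_topology)
  moreover have "Hausdorff_space (prod_topology X X)"
    using assms(2) Hausdorff_space_prod_topology by blast
  moreover have "?S \<subseteq> topspace ?P"
    using assms(3) by (auto simp: PiE_iff)
  ultimately have "(\<lambda>\<xi>. (\<xi> a, \<xi> b)) ` (?P closure_of ?S)
      = prod_topology X X closure_of ((\<lambda>\<xi>. (\<xi> a, \<xi> b)) ` ?S)"
    by (rule image_closure_of_compact)
  moreover have "(\<lambda>\<xi>. (\<xi> a, \<xi> b)) ` ?S = orbit (\<lambda>g. map_prod (act g) (act g)) (a, b)"
    unfolding orbit_def
  proof (intro equalityI subsetI)
    fix z assume "z \<in> (\<lambda>\<xi>. (\<xi> a, \<xi> b)) ` ?S"
    then show "z \<in> range (\<lambda>g. map_prod (act g) (act g) (a, b))"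
      using assms(4,5) by auto
  next
    fix z assume "z \<in> range (\<lambda>g. map_prod (act g) (act g) (a, b))"
    then obtain g where "z = (act g a, act g b)"
      by auto
    then show "z \<in> (\<lambda>\<xi>. (\<xi> a, \<xi> b)) ` ?S"
      using assms(4,5) by (intro image_eqI[where x="restrict (act g) (topspace X)"]) auto
  qed
  ultimately show ?thesis
    unfolding ellis_def orbit_closure_def by simp
qed

definition fiber_relation ::
    "'a topology \<Rightarrow> ('g \<Rightarrow> 'a \<Rightarrow> 'a) \<Rightarrow> ('a \<times> 'k) set \<Rightarrow> ('a \<times> 'a) set" where
  "fiber_relation X act F = {(a, b). a \<in> topspace X \<and> b \<in> topspace X \<and>
     (\<forall>(p, q) \<in> orbit_closure (prod_topology X X) (\<lambda>g. map_prod (act g) (act g)) (a, b).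
        fiber F p = fiber F q)}"

lemma sc_rel_eq_fiber_relation:
  assumes "compact_space X" "Hausdorff_space X"
    and "\<And>g x. x \<in> topspace X \<Longrightarrow> act g x \<in> topspace X"
  shows "sc_rel X K act x0 f = fiber_relation X act (graph_closure X K act x0 f)"
proof -
  have key: "(\<forall>\<xi>\<in>ellis X act. fiber F (\<xi> a) = fiber F (\<xi> b)) \<longleftrightarrow>
      (\<forall>(p, q) \<in> orbit_closure (prod_topology X X) (\<lambda>g. map_prod (act g) (act g)) (a, b).
        fiber F p = fiber F q)"
    if "a \<in> topspace X" "b \<in> topspace X" for a b and F :: "('a \<times> 'k) set"
  proof -
    have "orbit_closure (prod_topology X X) (\<lambda>g. map_prod (act g) (act g)) (a, b)
        = (\<lambda>\<xi>. (\<xi> a, \<xi> b)) ` ellis X act"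
      using ellis_image_pair[of X act, OF assms that] by simp
    then show ?thesis
      by force
  qed
  have "(a, b) \<in> sc_rel X K act x0 f \<longleftrightarrow> (a, b) \<in> fiber_relation X act (graph_closure X K act x0 f)"
    for a b
  proof (cases "a \<in> topspace X \<and> b \<in> topspace X")
    case True
    then show ?thesis
      using key[of a b "graph_closure X K act x0 f"] unfolding sc_rel_def fiber_relation_def by simp
  qed (auto simp: sc_rel_def fiber_relation_def)
  then show ?thesis
    by (simp add: set_eq_iff split_paired_all)
qed

locale minimal_equicontinuous_system = equicontinuous_system +
  assumes minimal: "minimal_action X act"

sublocale minimal_equicontinuous_system \<subseteq>
  pairs: equicontinuous_system "prod_topology X X" "\<lambda>g. map_prod (act g) (act g)"
  by (rule equicontinuous_system_pairs[OF equicontinuous_system_axioms])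

context minimal_equicontinuous_system
begin

abbreviation pair_orbit_closure :: "'a \<Rightarrow> 'a \<Rightarrow> ('a \<times> 'a) set" where
  "pair_orbit_closure a b \<equiv> orbit_closure (prod_topology X X) (\<lambda>g. map_prod (act g) (act g)) (a, b)"

lemma orbit_closure_eq_topspace: "x \<in> topspace X \<Longrightarrow> orbit_closure X act x = topspace X"
  using minimal unfolding minimal_action_def orbit_closure_def by blast

lemma pair_orbit_closure_subset: "pair_orbit_closure a b \<subseteq> topspace X \<times> topspace X"
  using pairs.orbit_closure_subset_topspace by simp

lemma pair_orbit_closure_swap:
  assumes "(p, q) \<in> pair_orbit_closure a b"
  shows "(q, p) \<in> pair_orbit_closure b a"
proof -
  have "continuous_map (prod_topology X X) (prod_topology X X) (\<lambda>z. (snd z, fst z))"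
    by (intro continuous_intros)
  then have "(\<lambda>z. (snd z, fst z)) ` pair_orbit_closure a b
      \<subseteq> prod_topology X X closure_of ((\<lambda>z. (snd z, fst z)) ` orbit (\<lambda>g. map_prod (act g) (act g)) (a, b))"
    unfolding orbit_closure_def by (rule continuous_map_image_closure_subset)
  also have "(\<lambda>z. (snd z, fst z)) ` orbit (\<lambda>g. map_prod (act g) (act g)) (a, b)
      = orbit (\<lambda>g. map_prod (act g) (act g)) (b, a)"
    unfolding orbit_def by (simp add: image_image)
  finally show ?thesis
    using assms unfolding orbit_closure_def by force
qed

lemma ex_pair_orbit_closure_fst:
  assumes "a \<in> topspace X" "b \<in> topspace X" "z \<in> topspace X"
  obtains c where "(z, c) \<in> pair_orbit_closure a b"
proof -
  have "(a, b) \<in> topspace (prod_topology X X)"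
    using assms by simp
  then have "fst ` pair_orbit_closure a b
      = X closure_of (fst ` orbit (\<lambda>g. map_prod (act g) (act g)) (a, b))"
    unfolding orbit_closure_def
    by (intro image_closure_of_compact continuous_map_fst compact_prod Hausdorff
        pairs.orbit_subset_topspace)
  also have "fst ` orbit (\<lambda>g. map_prod (act g) (act g)) (a, b) = orbit act a"
    unfolding orbit_def by (simp add: image_image)
  finally have "fst ` pair_orbit_closure a b = topspace X"
    using orbit_closure_eq_topspace[OF assms(1)] unfolding orbit_closure_def by simp
  then show thesis
    using assms(3) that by force
qed

lemma pair_orbit_closure_transfer_snd:
  assumes "a \<in> topspace X" "c \<in> topspace X" "c' \<in> topspace X" "closedin (prod_topology X X) C"
    and "\<And>g. (act g c, act g c') \<in> C" and "(p, q) \<in> pair_orbit_closure a c"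
  obtains q' where "(p, q') \<in> pair_orbit_closure a c'" "(q, q') \<in> C"
proof -
  let ?C = "{w \<in> topspace (prod_topology (prod_topology X X) (prod_topology X X)).
             transpose_pairs w \<in> (\<lambda>x. (x, x)) ` topspace X \<times> C}"
  have C: "closedin (prod_topology (prod_topology X X) (prod_topology X X)) ?C"
  proof (rule closedin_continuous_map_preimage[OF continuous_map_transpose_pairs])
    show "closedin (prod_topology (prod_topology X X) (prod_topology X X)) ((\<lambda>x. (x, x)) ` topspace X \<times> C)"
      using Hausdorff_space_closedin_diagonal[THEN iffD1, OF Hausdorff] assms(4)
      by (simp add: closedin_prod_Times_iff)
  qed
  have orbit_C: "(map_prod (act g) (act g) (a, c), map_prod (act g) (act g) (a, c')) \<in> ?C" for g
    using assms(1,2,3,5) closedin_subset[OF assms(4)] by (auto simp: act_in_topspace)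
  have "(a, c) \<in> topspace (prod_topology X X)" "(a, c') \<in> topspace (prod_topology X X)"
    using assms(1,2,3) by simp_all
  then obtain z where "z \<in> pair_orbit_closure a c'" "((p, q), z) \<in> ?C"
    by (rule pairs.orbit_closure_transfer[OF _ _ C orbit_C assms(6)])
  then show thesis
    using that by (cases z) auto
qed

lemma fiber_relation_subset: "fiber_relation X act F \<subseteq> topspace X \<times> topspace X"
  unfolding fiber_relation_def by auto

lemma fiber_relation_sym:
  assumes "(a, b) \<in> fiber_relation X act F"
  shows "(b, a) \<in> fiber_relation X act F"
proof -
  have "fiber F p = fiber F q" if "(p, q) \<in> pair_orbit_closure b a" for p q
    using assms pair_orbit_closure_swap[OF that] unfolding fiber_relation_def by auto
  then show ?thesis
    using assms unfolding fiber_relation_def by auto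
qed

lemma fiber_relation_saturated:
  assumes "z \<in> fiber_relation X act F"
    and "w \<in> orbit_closure (prod_topology X X) (\<lambda>g. map_prod (act g) (act g)) z"
  shows "w \<in> fiber_relation X act F"
proof -
  obtain a b u v where zw: "z = (a, b)" "w = (u, v)"
    by fastforce
  have "z \<in> topspace (prod_topology X X)"
    using assms(1) fiber_relation_subset by auto
  then have "pair_orbit_closure u v \<subseteq> pair_orbit_closure a b"
    using pairs.orbit_closure_subset_of_mem[OF _ assms(2)] zw by simp
  moreover have "(u, v) \<in> topspace X \<times> topspace X"
    using assms(2) pairs.orbit_closure_subset_topspace[of z] zw by auto
  moreover have "\<forall>(p, q) \<in> pair_orbit_closure a b. fiber F p = fiber F q"
    using assms(1) zw unfolding fiber_relation_def by simp
  ultimately show ?thesis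
    unfolding fiber_relation_def zw by blast
qed

lemma act_mem_fiber_relation:
  assumes "(a, b) \<in> fiber_relation X act F"
  shows "(act g a, act g b) \<in> fiber_relation X act F"
proof -
  have "(a, b) \<in> topspace (prod_topology X X)"
    using assms fiber_relation_subset by auto
  then have "map_prod (act g) (act g) (a, b) \<in> pair_orbit_closure a b"
    using pairs.act_mem_orbit_closure pairs.mem_orbit_closure_self by blast
  then show ?thesis
    using fiber_relation_saturated[OF assms] by simp
qed

text \<open>The first coordinate \<open>a\<close> is held fixed: fibres of a closed \<open>F\<close> are only upper
  semicontinuous, so inclusions survive a limit only if the point \<open>p\<close> itself does not move.\<close>
lemma closedin_fiber_inclusion:
  assumes F: "closedin (prod_topology X K) F" and a: "a \<in> topspace X"
  shows "closedin X {c \<in> topspace X. \<forall>(p, q) \<in> pair_orbit_closure a c. fiber F p \<subseteq> fiber F q}"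
    (is "closedin X ?S")
proof -
  have "openin X (topspace X - ?S)"
  proof (subst openin_subopen, intro ballI)
    fix c assume "c \<in> topspace X - ?S"
    then obtain p q k where c: "c \<in> topspace X" and pq: "(p, q) \<in> pair_orbit_closure a c"
      and k: "(p, k) \<in> F" "(q, k) \<notin> F"
      unfolding fiber_def by auto
    have "q \<in> topspace X"
      using pq pair_orbit_closure_subset by blast
    moreover have "k \<in> topspace K"
      using k(1) closedin_subset[OF F] by auto
    ultimately have "(q, k) \<in> topspace (prod_topology X K) - F"
      using k(2) by simp
    then obtain N N' where N: "openin X N" "q \<in> N" "k \<in> N'"
      "N \<times> N' \<subseteq> topspace (prod_topology X K) - F"
      using openin_prod_topologyE[OF openin_diff[OF openin_topspace F]] by metis
    obtain W U where W: "q \<in> W" and U: "entourage X U"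
      and WU: "\<And>s t. (s, t) \<in> prod_topology X X closure_of U \<Longrightarrow> s \<in> W \<Longrightarrow> t \<in> N"
      using entourage_closure_avoiding[OF compact Hausdorff N(1,2)] by metis
    obtain V where V: "entourage X V" and VU: "\<And>g s t. (s, t) \<in> V \<Longrightarrow> (act g s, act g t) \<in> U"
      using equicontinuous_actionE[OF equicontinuous U] by blast
    have "(c, c) \<in> V"
      using V c unfolding entourage_def by blast
    then obtain P P' where P: "openin X P'" "c \<in> P" "c \<in> P'" "P \<times> P' \<subseteq> V"
      using V unfolding entourage_def by (metis openin_prod_topologyE)
    have "P' \<subseteq> topspace X - ?S"
    proof
      fix c' assume c': "c' \<in> P'"
      then have c'T: "c' \<in> topspace X"
        using P(1) openin_subset by blast
      have "(act g c, act g c') \<in> prod_topology X X closure_of U" for g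
        using VU[of c c' g] P(2,4) c' U closure_of_subset[OF openin_subset] unfolding entourage_def
        by blast
      then obtain q' where q': "(p, q') \<in> pair_orbit_closure a c'"
        "(q, q') \<in> prod_topology X X closure_of U"
        using pair_orbit_closure_transfer_snd[OF a c c'T closedin_closure_of _ pq] by blast
      then have "(q', k) \<notin> F"
        using WU W N(3,4) by blast
      then show "c' \<in> topspace X - ?S"
        using q'(1) k(1) c'T unfolding fiber_def by blast
    qed
    then show "\<exists>T. openin X T \<and> c \<in> T \<and> T \<subseteq> topspace X - ?S"
      using P(1,3) by blast
  qed
  then show ?thesis
    by (simp add: closedin_def)
qed

text \<open>By minimality every pair orbit closure meets \<open>{a} \<times> X\<close>, and the relation is
  saturated by pair orbit closures.\<close>
lemma closure_fiber_relation_slice: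
  assumes "(a, b) \<in> prod_topology X X closure_of fiber_relation X act F"
  obtains c where "(a, c) \<in> pair_orbit_closure a b"
    "c \<in> X closure_of {c. (a, c) \<in> fiber_relation X act F}"
proof -
  let ?Y = "prod_topology (prod_topology X X) X"
  let ?R = "fiber_relation X act F"
  let ?O = "orbit_closure (prod_topology X X) (\<lambda>g. map_prod (act g) (act g))"
  have a: "a \<in> topspace X"
    using closure_of_subset_topspace assms by fastforce
  define P where "P = {w \<in> topspace ?Y. fst w \<in> ?R \<and> (a, snd w) \<in> ?O (fst w)}"
  have "?R \<subseteq> fst ` P"
  proof
    fix z assume z: "z \<in> ?R"
    then obtain x y where xy: "z = (x, y)" "x \<in> topspace X" "y \<in> topspace X"
      using fiber_relation_subset by blast
    obtain c where "(a, c) \<in> pair_orbit_closure x y"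
      by (rule ex_pair_orbit_closure_fst[OF xy(2,3) a])
    then have "(z, c) \<in> P"
      unfolding P_def using z xy pair_orbit_closure_subset by auto
    then show "z \<in> fst ` P"
      by force
  qed
  then have "fst ` P = ?R"
    unfolding P_def by auto
  moreover have "compact_space ?Y"
    using compact_prod compact by (simp add: compact_space_prod_topology)
  moreover have "P \<subseteq> topspace ?Y"
    unfolding P_def by blast
  ultimately have "fst ` (?Y closure_of P) = prod_topology X X closure_of ?R"
    using image_closure_of_compact[OF continuous_map_fst _ Hausdorff_prod] by metis
  then obtain w where w: "w \<in> ?Y closure_of P" "fst w = (a, b)"
    using assms by force
  have "continuous_map ?Y (prod_topology (prod_topology X X) (prod_topology X X))
      (\<lambda>w. (fst w, (a, snd w)))"
    using a by (intro continuous_intros) auto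
  then have "closedin ?Y {w \<in> topspace ?Y. (fst w, (a, snd w))
      \<in> {(z, z'). z \<in> topspace (prod_topology X X) \<and> z' \<in> ?O z}}"
    by (rule closedin_continuous_map_preimage[OF _ pairs.closedin_orbit_closure_relation])
  moreover have "P \<subseteq> {w \<in> topspace ?Y. (fst w, (a, snd w))
      \<in> {(z, z'). z \<in> topspace (prod_topology X X) \<and> z' \<in> ?O z}}"
    unfolding P_def using fiber_relation_subset by auto
  ultimately have "(a, snd w) \<in> pair_orbit_closure a b"
    using closure_of_minimal w by fastforce
  moreover have "snd ` P \<subseteq> {c. (a, c) \<in> ?R}"
    unfolding P_def using fiber_relation_saturated by auto
  then have "snd w \<in> X closure_of {c. (a, c) \<in> ?R}"
    using continuous_map_image_closure_subset[OF continuous_map_snd, where S=P] closure_of_mono w(1)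
    by blast
  ultimately show thesis
    by (rule that)
qed

lemma fiber_subset_of_mem_closure_fiber_relation:
  assumes F: "closedin (prod_topology X K) F"
    and ab: "(a, b) \<in> prod_topology X X closure_of fiber_relation X act F"
    and pq: "(p, q) \<in> pair_orbit_closure a b"
  shows "fiber F p \<subseteq> fiber F q"
proof -
  have a: "a \<in> topspace X"
    using closure_of_subset_topspace ab by fastforce
  obtain c where c: "(a, c) \<in> pair_orbit_closure a b"
    "c \<in> X closure_of {c. (a, c) \<in> fiber_relation X act F}"
    using closure_fiber_relation_slice[OF ab] by blast
  let ?S = "{c \<in> topspace X. \<forall>(p, q) \<in> pair_orbit_closure a c. fiber F p \<subseteq> fiber F q}"
  have "{c. (a, c) \<in> fiber_relation X act F} \<subseteq> ?S"
  proof
    fix c assume "c \<in> {c. (a, c) \<in> fiber_relation X act F}"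
    then have "c \<in> topspace X" "\<forall>(p, q) \<in> pair_orbit_closure a c. fiber F p = fiber F q"
      unfolding fiber_relation_def by simp_all
    then show "c \<in> ?S"
      by (simp add: case_prod_beta)
  qed
  then have "X closure_of {c. (a, c) \<in> fiber_relation X act F} \<subseteq> ?S"
    by (rule closure_of_minimal[OF _ closedin_fiber_inclusion[OF F a]])
  then have "c \<in> ?S"
    using c(2) by (rule subsetD)
  moreover have "(a, b) \<in> topspace (prod_topology X X)"
    using subsetD[OF closure_of_subset_topspace ab] .
  then have "pair_orbit_closure a c = pair_orbit_closure a b"
    using pairs.orbit_closure_eq_of_mem c(1) by blast
  ultimately show ?thesis
    using pq by auto
qed

lemma closedin_fiber_relation:
  assumes F: "closedin (prod_topology X K) F"
  shows "closedin (prod_topology X X) (fiber_relation X act F)"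
proof -
  let ?R = "fiber_relation X act F"
  have "prod_topology X X closure_of ?R \<subseteq> ?R"
  proof clarify
    fix a b assume ab: "(a, b) \<in> prod_topology X X closure_of ?R"
    have "continuous_map (prod_topology X X) (prod_topology X X) (\<lambda>z. (snd z, fst z))"
      by (intro continuous_intros)
    then have "(\<lambda>z. (snd z, fst z)) ` (prod_topology X X closure_of ?R)
        \<subseteq> prod_topology X X closure_of ((\<lambda>z. (snd z, fst z)) ` ?R)"
      by (rule continuous_map_image_closure_subset)
    also have "\<dots> \<subseteq> prod_topology X X closure_of ?R"
      using fiber_relation_sym by (intro closure_of_mono) auto
    finally have ba: "(b, a) \<in> prod_topology X X closure_of ?R"
      using ab by force
    have "fiber F p = fiber F q" if "(p, q) \<in> pair_orbit_closure a b" for p q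
      using fiber_subset_of_mem_closure_fiber_relation[OF F ab that]
        fiber_subset_of_mem_closure_fiber_relation[OF F ba pair_orbit_closure_swap[OF that]]
      by blast
    moreover have "a \<in> topspace X" "b \<in> topspace X"
      using closure_of_subset_topspace ab by fastforce+
    ultimately show "(a, b) \<in> ?R"
      unfolding fiber_relation_def by auto
  qed
  then show ?thesis
    using fiber_relation_subset closure_of_subset_eq by fastforce
qed

end



section \<open>Quotients of equicontinuous systems\<close>

lemma openin_quotient_topology:
  assumes "equiv (topspace X) R"
  shows "openin (quotient_topology X R) U \<longleftrightarrow> U \<subseteq> topspace X // R \<and> openin X (\<Union>U)"
proof -
  have "istopology (\<lambda>U. U \<subseteq> topspace X // R \<and> openin X (\<Union>U))"
    unfolding istopology_def
  proof (rule conjI; intro allI impI)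
    fix S U assume S: "S \<subseteq> topspace X // R \<and> openin X (\<Union>S)"
      and U: "U \<subseteq> topspace X // R \<and> openin X (\<Union>U)"
    then have "\<Union>(S \<inter> U) = \<Union>S \<inter> \<Union>U"
      using quotient_disj[OF assms] by blast
    then show "S \<inter> U \<subseteq> topspace X // R \<and> openin X (\<Union>(S \<inter> U))"
      using S U by auto
  next
    fix \<K> assume \<K>: "\<forall>K\<in>\<K>. K \<subseteq> topspace X // R \<and> openin X (\<Union>K)"
    have "openin X (\<Union>(Union ` \<K>))"
      using \<K> by (intro openin_Union) auto
    moreover have "\<Union>(\<Union>\<K>) = \<Union>(Union ` \<K>)"
      by blast
    ultimately show "\<Union>\<K> \<subseteq> topspace X // R \<and> openin X (\<Union>(\<Union>\<K>))"
      using \<K> by auto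
  qed
  then show ?thesis
    unfolding quotient_topology_def by (simp add: topology_inverse')
qed

lemma topspace_quotient_topology:
  assumes "equiv (topspace X) R"
  shows "topspace (quotient_topology X R) = topspace X // R"
proof -
  have "openin (quotient_topology X R) (topspace X // R)"
    using assms by (simp add: openin_quotient_topology Union_quotient)
  then show ?thesis
    using openin_quotient_topology[OF assms] unfolding topspace_def by blast
qed

locale equicontinuous_quotient = equicontinuous_system X act
  for X :: "'a topology" and act :: "'g::topological_group_add \<Rightarrow> 'a \<Rightarrow> 'a" +
  fixes R :: "('a \<times> 'a) set"
  assumes jointly_continuous: "continuous_map (prod_topology euclidean X) X (\<lambda>(g, x). act g x)"
    and equiv: "equiv (topspace X) R"
    and closedin_R: "closedin (prod_topology X X) R"
    and act_mem_R: "\<And>g x y. (x, y) \<in> R \<Longrightarrow> (act g x, act g y) \<in> R"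
begin

abbreviation Q :: "'a set topology" where "Q \<equiv> quotient_topology X R"
abbreviation qa :: "'g \<Rightarrow> 'a set \<Rightarrow> 'a set" where "qa \<equiv> quotient_action R act"
abbreviation proj :: "'a \<Rightarrow> 'a set" where "proj x \<equiv> R `` {x}"

lemma R_subset: "R \<subseteq> topspace X \<times> topspace X"
  using equiv unfolding equiv_def refl_on_def by blast

lemma topspace_Q: "topspace Q = topspace X // R"
  by (rule topspace_quotient_topology[OF equiv])

lemma openin_Q: "openin Q U \<longleftrightarrow> U \<subseteq> topspace X // R \<and> openin X (\<Union>U)"
  by (rule openin_quotient_topology[OF equiv])

lemma proj_in_topspace: "x \<in> topspace X \<Longrightarrow> proj x \<in> topspace Q"
  unfolding topspace_Q by (rule quotientI)

lemma mem_proj_self: "x \<in> topspace X \<Longrightarrow> x \<in> proj x"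
  by (rule equiv_class_self[OF equiv])

lemma proj_eq_iff: "x \<in> topspace X \<Longrightarrow> y \<in> topspace X \<Longrightarrow> proj x = proj y \<longleftrightarrow> (x, y) \<in> R"
  by (rule eq_equiv_class_iff[OF equiv])

lemma topspace_QE:
  assumes "c \<in> topspace Q"
  obtains x where "x \<in> topspace X" "c = proj x"
  using assms unfolding topspace_Q by (elim quotientE) blast

lemma eq_proj_of_mem:
  assumes "c \<in> topspace Q" "x \<in> c"
  shows "c = proj x" "x \<in> topspace X"
proof -
  obtain z where z: "z \<in> topspace X" "c = proj z"
    using assms(1) by (rule topspace_QE)
  then have "(z, x) \<in> R"
    using assms(2) by simp
  then show "c = proj x" "x \<in> topspace X"
    using z(2) equiv_class_eq[OF equiv] R_subset by auto
qed

lemma proj_image: "proj ` topspace X = topspace Q"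
  using proj_in_topspace topspace_QE by blast

lemma quotient_action_proj:
  assumes "x \<in> topspace X"
  shows "qa g (proj x) = proj (act g x)"
proof -
  have "proj (act g y) = proj (act g x)" if "y \<in> proj x" for y
    using that act_mem_R equiv_class_eq[OF equiv] by (metis Image_singleton_iff)
  moreover have "x \<in> proj x"
    using assms by (rule mem_proj_self)
  ultimately show ?thesis
    unfolding quotient_action_def by blast
qed

lemma continuous_map_proj: "continuous_map X Q proj"
  unfolding continuous_map_def
proof (intro conjI allI impI)
  show "proj \<in> topspace X \<rightarrow> topspace Q"
    using proj_in_topspace by blast
  fix U assume "openin Q U"
  then have U: "U \<subseteq> topspace Q" "openin X (\<Union>U)"
    unfolding openin_Q topspace_Q by auto
  have "{x \<in> topspace X. proj x \<in> U} = \<Union>U"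
    using U(1) eq_proj_of_mem mem_proj_self by blast
  then show "openin X {x \<in> topspace X. proj x \<in> U}"
    using U(2) by simp
qed

abbreviation proj2 :: "'a \<times> 'a \<Rightarrow> 'a set \<times> 'a set" where
  "proj2 z \<equiv> (proj (fst z), proj (snd z))"

lemma continuous_map_proj2: "continuous_map (prod_topology X X) (prod_topology Q Q) proj2"
  by (intro continuous_map_pairedI continuous_map_compose[OF continuous_map_fst continuous_map_proj,
        unfolded o_def] continuous_map_compose[OF continuous_map_snd continuous_map_proj, unfolded o_def])

lemma closedin_Image: "closedin X C \<Longrightarrow> closedin X (R `` C)"
proof -
  assume C: "closedin X C"
  have "R `` C = snd ` (R \<inter> (C \<times> topspace X))"
    using R_subset by force
  moreover have "closedin (prod_topology X X) (R \<inter> (C \<times> topspace X))"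
    using closedin_R C by (intro closedin_Int) (auto simp: closedin_prod_Times_iff)
  ultimately show ?thesis
    using closed_map_snd[OF compact, of X] unfolding closed_map_def by metis
qed

lemma closed_map_proj: "closed_map X Q proj"
  unfolding closed_map_def
proof (intro allI impI)
  fix C assume C: "closedin X C"
  then have CT: "C \<subseteq> topspace X"
    by (rule closedin_subset)
  have "\<Union>(topspace Q - proj ` C) = topspace X - R `` C"
  proof (intro equalityI subsetI)
    fix x assume "x \<in> \<Union>(topspace Q - proj ` C)"
    then obtain c where c: "c \<in> topspace Q" "c \<notin> proj ` C" "x \<in> c"
      by blast
    then have "c = proj x" "x \<in> topspace X"
      using eq_proj_of_mem by blast+
    then show "x \<in> topspace X - R `` C"
      using c(2) CT proj_eq_iff by blast
  next
    fix x assume x: "x \<in> topspace X - R `` C"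
    then have "proj x \<notin> proj ` C"
      using CT proj_eq_iff by blast
    then show "x \<in> \<Union>(topspace Q - proj ` C)"
      using x proj_in_topspace mem_proj_self by blast
  qed
  moreover have "openin X (topspace X - R `` C)"
    using closedin_Image[OF C] by (simp add: openin_diff)
  ultimately have "openin Q (topspace Q - proj ` C)"
    unfolding openin_Q topspace_Q by auto
  moreover have "proj ` C \<subseteq> topspace Q"
    using CT proj_in_topspace by blast
  ultimately show "closedin Q (proj ` C)"
    by (simp add: closedin_def)
qed

lemma compact_Q: "compact_space Q"
  using compact continuous_map_proj proj_image unfolding compact_space_def by (metis image_compactin)

lemma Hausdorff_Q: "Hausdorff_space Q"
  using normal_Hausdorff_space_closed_continuous_map_image[OF _ Hausdorff closed_map_proj
      continuous_map_proj proj_image]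
    compact_Hausdorff_or_regular_imp_normal_space[OF compact] Hausdorff by blast

lemma proper_map_proj: "proper_map X Q proj"
  unfolding proper_map_def
proof (intro conjI ballI)
  show "closed_map X Q proj"
    by (rule closed_map_proj)
  fix c assume c: "c \<in> topspace Q"
  then obtain z where z: "z \<in> topspace X" "c = proj z"
    by (rule topspace_QE)
  have "{x \<in> topspace X. proj x = c} = c"
    using eq_proj_of_mem[OF c] c mem_proj_self by blast
  moreover have "closedin X c"
    using closedin_Image[OF closedin_Hausdorff_singleton[OF Hausdorff z(1)]] z(2) by simp
  ultimately show "compactin X {x \<in> topspace X. proj x = c}"
    using closedin_compact_space[OF compact] by simp
qed

text \<open>\<open>id \<times> proj\<close> is proper, hence a quotient map, so joint continuity descends to \<open>Q\<close>.\<close>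
lemma jointly_continuous_Q: "continuous_map (prod_topology euclidean Q) Q (\<lambda>(g, c). qa g c)"
proof -
  let ?\<rho> = "\<lambda>(g, x). (id g, proj x)"
  let ?GX = "prod_topology (euclidean :: 'g topology) X"
  have "proper_map ?GX (prod_topology euclidean Q) ?\<rho>"
    using proper_map_prod[of euclidean X euclidean Q id proj] proper_map_proj proper_map_id by blast
  moreover have "continuous_map ?GX (prod_topology euclidean Q) ?\<rho>"
    using continuous_map_proj by (simp add: continuous_map_prod_top)
  moreover have "?\<rho> ` topspace ?GX = topspace (prod_topology euclidean Q)"
  proof
    show "?\<rho> ` topspace ?GX \<subseteq> topspace (prod_topology euclidean Q)"
      using proj_in_topspace by auto
    show "topspace (prod_topology euclidean Q) \<subseteq> ?\<rho> ` topspace ?GX"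
    proof clarify
      fix g c assume "(g, c) \<in> topspace (prod_topology (euclidean :: 'g topology) Q)"
      then obtain x where "x \<in> topspace X" "c = proj x"
        by (auto elim: topspace_QE)
      then show "(g, c) \<in> ?\<rho> ` topspace ?GX"
        by (intro image_eqI[where x="(g, x)"]) auto
    qed
  qed
  ultimately have "quotient_map ?GX (prod_topology euclidean Q) ?\<rho>"
    using perfect_imp_quotient_map unfolding perfect_map_def by blast
  moreover have "continuous_map ?GX Q ((\<lambda>(g, c). qa g c) \<circ> ?\<rho>)"
  proof (rule continuous_map_eq[OF continuous_map_compose[OF jointly_continuous continuous_map_proj]])
    fix w assume "w \<in> topspace ?GX"
    then show "(proj \<circ> (\<lambda>(g, x). act g x)) w = ((\<lambda>(g, c). qa g c) \<circ> ?\<rho>) w"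
      using quotient_action_proj by (cases w) auto
  qed
  ultimately show ?thesis
    by (rule continuous_compose_quotient_map)
qed

lemma tds_Q: "tds Q qa"
  unfolding tds_def
proof (intro conjI allI impI ballI compact_Q Hausdorff_Q jointly_continuous_Q)
  fix g h c assume "c \<in> topspace Q"
  then obtain x where x: "x \<in> topspace X" "c = proj x"
    by (rule topspace_QE)
  then show "qa g c \<in> topspace Q" "qa 0 c = c" "qa (g + h) c = qa g (qa h c)"
    using quotient_action_proj act_in_topspace proj_in_topspace act_zero act_add by simp_all
qed

lemma orbit_Q: "x \<in> topspace X \<Longrightarrow> orbit qa (proj x) = proj ` orbit act x"
  unfolding orbit_def by (auto simp: quotient_action_proj image_image)

lemma minimal_action_Q:
  assumes "minimal_action X act"
  shows "minimal_action Q qa"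
  unfolding minimal_action_def
proof
  fix c assume "c \<in> topspace Q"
  then obtain x where x: "x \<in> topspace X" "c = proj x"
    by (rule topspace_QE)
  have "proj ` topspace X \<subseteq> Q closure_of (proj ` orbit act x)"
    using continuous_map_image_closure_subset[OF continuous_map_proj] assms x(1)
    unfolding minimal_action_def by metis
  then show "Q closure_of orbit qa c = topspace Q"
    using x orbit_Q proj_image closure_of_subset_topspace by (metis subset_antisym)
qed

lemma equicontinuous_Q: "equicontinuous_action Q qa"
  unfolding equicontinuous_action_def
proof (intro allI impI)
  fix U assume U: "openin (prod_topology Q Q) U \<and> (\<forall>c\<in>topspace Q. (c, c) \<in> U)"
  let ?U = "{z \<in> topspace (prod_topology X X). proj2 z \<in> U}"
  have "R \<subseteq> ?U"
    using U R_subset proj_eq_iff proj_in_topspace by fastforce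
  then obtain N where N: "openin (prod_topology X X) N" "R \<subseteq> N"
    and NU: "\<And>g x y. (x, y) \<in> N \<Longrightarrow> (act g x, act g y) \<in> ?U"
    using invariant_relation_uniform_nbhd[OF closedin_R act_mem_R
        openin_continuous_map_preimage[OF continuous_map_proj2 conjunct1[OF U]]] by blast
  let ?V = "topspace (prod_topology Q Q) - proj2 ` (topspace (prod_topology X X) - N)"
  have "closed_map (prod_topology X X) (prod_topology Q Q) proj2"
    using continuous_map_proj2 compact_prod Hausdorff_Q by (simp add: continuous_imp_closed_map Hausdorff_space_prod_topology)
  moreover have "closedin (prod_topology X X) (topspace (prod_topology X X) - N)"
    using N(1) by blast
  ultimately have "openin (prod_topology Q Q) ?V"
    unfolding closed_map_def by blast
  show "\<exists>V. openin (prod_topology Q Q) V \<and> (\<forall>c\<in>topspace Q. (c, c) \<in> V) \<and>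
      (\<forall>g c d. (c, d) \<in> V \<longrightarrow> (qa g c, qa g d) \<in> U)"
  proof (intro exI[where x="?V"] conjI ballI allI impI)
    show "openin (prod_topology Q Q) ?V" by fact
    show "(c, c) \<in> ?V" if "c \<in> topspace Q" for c
      using that N(2) R_subset proj_eq_iff by (fastforce elim: topspace_QE)
    fix g c d assume cd: "(c, d) \<in> ?V"
    then have "c \<in> topspace Q" "d \<in> topspace Q"
      by auto
    then obtain x y where xy: "x \<in> topspace X" "c = proj x" "y \<in> topspace X" "d = proj y"
      by (metis topspace_QE)
    have "(x, y) \<in> N"
    proof (rule ccontr)
      assume "(x, y) \<notin> N"
      then have "(c, d) \<in> proj2 ` (topspace (prod_topology X X) - N)"
        using xy by (intro image_eqI[where x="(x, y)"]) auto
      then show False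
        using cd by blast
    qed
    then show "(qa g c, qa g d) \<in> U"
      using NU xy quotient_action_proj by auto
  qed
qed

end

section \<open>The induced semicocycle\<close>

lemma fiber_closure_graph:
  assumes "continuous_map (subtopology X S) K f" "Hausdorff_space K" "S \<subseteq> topspace X" "y \<in> S"
  shows "fiber (prod_topology X K closure_of ((\<lambda>x. (x, f x)) ` S)) y = {f y}"
proof -
  let ?G = "(\<lambda>x. (x, f x)) ` S"
  have sub: "?G \<subseteq> S \<times> topspace K"
    using continuous_map_image_subset_topspace[OF assms(1)] assms(3) by (auto simp: Int_absorb1)
  have "closedin (prod_topology (subtopology X S) K) ?G"
    using continuous_map_imp_closed_graph[OF assms(1,2)] assms(3) by (simp add: Int_absorb1)
  then have "subtopology (prod_topology X K) (S \<times> topspace K) closure_of ?G = ?G"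
    by (simp add: prod_topology_subtopology closure_of_closedin)
  then have G: "(S \<times> topspace K) \<inter> prod_topology X K closure_of ?G = ?G"
    using closure_of_subtopology[of "prod_topology X K" "S \<times> topspace K" ?G] Int_absorb1[OF sub]
    by simp
  have "?G \<subseteq> topspace (prod_topology X K)"
    using sub assms(3) by auto
  then have "(y, f y) \<in> prod_topology X K closure_of ?G"
    using closure_of_subset assms(4) by blast
  moreover have "k = f y" if "(y, k) \<in> prod_topology X K closure_of ?G" for k
  proof -
    have "k \<in> topspace K"
      using closure_of_subset_topspace that by fastforce
    then show ?thesis
      using G that assms(4) by blast
  qed
  ultimately show ?thesis
    unfolding fiber_def by blast
qed

locale semicocycle_system = minimal_equicontinuous_system X act
  for X :: "'a topology" and act :: "'g::topological_group_add \<Rightarrow> 'a \<Rightarrow> 'a" +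
  fixes K :: "'k topology" and x0 :: 'a and f :: "'a \<Rightarrow> 'k"
  assumes jointly_continuous: "continuous_map (prod_topology euclidean X) X (\<lambda>(g, x). act g x)"
    and compact_K: "compact_space K" and Hausdorff_K: "Hausdorff_space K"
    and semicocycle: "semicocycle X K act x0 f"
begin

abbreviation F :: "('a \<times> 'k) set" where "F \<equiv> graph_closure X K act x0 f"

lemma x0_in_topspace: "x0 \<in> topspace X"
  using semicocycle unfolding semicocycle_def by blast

lemma continuous_map_f: "continuous_map (subtopology X (orbit act x0)) K f"
  using semicocycle unfolding semicocycle_def by blast

lemma closedin_F: "closedin (prod_topology X K) F"
  unfolding graph_closure_def by simp

lemma fiber_F_orbit: "y \<in> orbit act x0 \<Longrightarrow> fiber F y = {f y}"
  unfolding graph_closure_def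
  by (rule fiber_closure_graph[OF continuous_map_f Hausdorff_K orbit_subset_topspace[OF x0_in_topspace]])

lemma sc_rel_eq: "sc_rel X K act x0 f = fiber_relation X act F"
  by (rule sc_rel_eq_fiber_relation[OF compact Hausdorff act_in_topspace])

lemma fiber_eq_of_sc_rel: "(a, b) \<in> sc_rel X K act x0 f \<Longrightarrow> fiber F a = fiber F b"
  unfolding sc_rel_eq fiber_relation_def
  using pairs.mem_orbit_closure_self[of "(a, b)"] by auto

end

sublocale semicocycle_system \<subseteq> equicontinuous_quotient X act "sc_rel X K act x0 f"
proof unfold_locales
  show "continuous_map (prod_topology euclidean X) X (\<lambda>(g, x). act g x)"
    by (rule jointly_continuous)
  show "equiv (topspace X) (sc_rel X K act x0 f)"
    unfolding equiv_def refl_on_def sym_def trans_def sc_rel_def by auto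
  show "closedin (prod_topology X X) (sc_rel X K act x0 f)"
    unfolding sc_rel_eq by (rule closedin_fiber_relation[OF closedin_F])
  show "(act g x, act g y) \<in> sc_rel X K act x0 f" if "(x, y) \<in> sc_rel X K act x0 f" for g x y
    using that unfolding sc_rel_eq by (rule act_mem_fiber_relation)
qed

context semicocycle_system
begin

text \<open>Only the values on the orbit of \<open>proj x0\<close> matter; elsewhere \<open>SOME\<close> yields junk.\<close>
definition induced_semicocycle :: "'a set \<Rightarrow> 'k" where
  "induced_semicocycle c = f (SOME y. y \<in> orbit act x0 \<and> proj y = c)"

lemma induced_semicocycle_proj:
  assumes y: "y \<in> orbit act x0"
  shows "induced_semicocycle (proj y) = f y"
proof -
  have "\<exists>y'. y' \<in> orbit act x0 \<and> proj y' = proj y"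
    using y by blast
  then obtain y' where y': "y' \<in> orbit act x0" "proj y' = proj y"
    "induced_semicocycle (proj y) = f y'"
    unfolding induced_semicocycle_def by (metis (mono_tags, lifting) someI_ex)
  have "(y', y) \<in> sc_rel X K act x0 f"
    using y y'(1,2) orbit_subset_topspace[OF x0_in_topspace] proj_eq_iff by blast
  then have "{f y'} = {f y}"
    using fiber_eq_of_sc_rel fiber_F_orbit y y'(1) by metis
  then show ?thesis
    using y'(3) by simp
qed

lemma induced_semicocycle_orbit: "induced_semicocycle (qa g (proj x0)) = f (act g x0)"
  using quotient_action_proj[OF x0_in_topspace] induced_semicocycle_proj
  unfolding orbit_def by simp

lemma orbit_proj_x0: "orbit qa (proj x0) = proj ` orbit act x0"
  by (rule orbit_Q[OF x0_in_topspace])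

lemma continuous_map_induced_semicocycle:
  "continuous_map (subtopology Q (orbit qa (proj x0))) K induced_semicocycle"
  unfolding continuous_map_closedin
proof (intro conjI allI impI)
  show "induced_semicocycle \<in> topspace (subtopology Q (orbit qa (proj x0))) \<rightarrow> topspace K"
    using continuous_map_image_subset_topspace[OF continuous_map_f] induced_semicocycle_proj
      orbit_subset_topspace[OF x0_in_topspace]
    by (auto simp: orbit_proj_x0 Int_absorb1)
  fix C assume C: "closedin K C"
  let ?Z = "fst ` (F \<inter> (topspace X \<times> C))"
  have "closedin (prod_topology X K) (F \<inter> (topspace X \<times> C))"
    using closedin_F C by (intro closedin_Int) (auto simp: closedin_prod_Times_iff)
  then have "closedin X ?Z"
    using closed_map_fst[OF compact_K, of X] unfolding closed_map_def by blast
  then have "closedin Q (proj ` ?Z)"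
    using closed_map_proj unfolding closed_map_def by blast
  moreover have key: "proj y \<in> proj ` ?Z \<longleftrightarrow> f y \<in> C" if y: "y \<in> orbit act x0" for y
  proof
    assume "proj y \<in> proj ` ?Z"
    then obtain z k where zk: "(z, k) \<in> F" "k \<in> C" "proj z = proj y"
      by auto
    have "z \<in> topspace X" "y \<in> topspace X"
      using zk(1) closedin_subset[OF closedin_F] y orbit_subset_topspace[OF x0_in_topspace] by auto
    then have "fiber F z = {f y}"
      using zk(3) proj_eq_iff fiber_eq_of_sc_rel fiber_F_orbit[OF y] by metis
    moreover have "k \<in> fiber F z"
      using zk(1) unfolding fiber_def by simp
    ultimately show "f y \<in> C"
      using zk(2) by simp
  next
    assume "f y \<in> C"
    moreover have "(y, f y) \<in> F"
      using fiber_F_orbit[OF y] unfolding fiber_def by auto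
    moreover have "y \<in> topspace X"
      using y orbit_subset_topspace[OF x0_in_topspace] by auto
    ultimately show "proj y \<in> proj ` ?Z"
      by force
  qed
  have "c \<in> topspace (subtopology Q (orbit qa (proj x0))) \<and> induced_semicocycle c \<in> C
      \<longleftrightarrow> c \<in> proj ` ?Z \<inter> orbit qa (proj x0)" for c
  proof (cases "c \<in> orbit qa (proj x0)")
    case True
    then obtain y where y: "y \<in> orbit act x0" "c = proj y"
      by (auto simp: orbit_proj_x0)
    then have "c \<in> topspace Q"
      using orbit_subset_topspace[OF x0_in_topspace] proj_in_topspace by blast
    then show ?thesis
      using True y key[OF y(1)] induced_semicocycle_proj[OF y(1)] by simp
  qed simp
  then have "{c \<in> topspace (subtopology Q (orbit qa (proj x0))). induced_semicocycle c \<in> C}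
      = proj ` ?Z \<inter> orbit qa (proj x0)"
    by blast
  ultimately show "closedin (subtopology Q (orbit qa (proj x0)))
      {c \<in> topspace (subtopology Q (orbit qa (proj x0))). induced_semicocycle c \<in> C}"
    unfolding closedin_subtopology by blast
qed

lemma semicocycle_induced: "semicocycle Q K qa (proj x0) induced_semicocycle"
  unfolding semicocycle_def
  using x0_in_topspace proj_in_topspace minimal_action_Q[OF minimal] continuous_map_induced_semicocycle
  unfolding minimal_action_def by blast

lemma orbit_closure_Q_pair:
  assumes "a \<in> topspace X" "b \<in> topspace X"
  shows "orbit_closure (prod_topology Q Q) (\<lambda>g. map_prod (qa g) (qa g)) (proj a, proj b)
      = proj2 ` pair_orbit_closure a b"
proof -
  have "orbit (\<lambda>g. map_prod (qa g) (qa g)) (proj a, proj b)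
      = proj2 ` orbit (\<lambda>g. map_prod (act g) (act g)) (a, b)"
    unfolding orbit_def image_image using quotient_action_proj assms by simp
  moreover have "proj2 ` (prod_topology X X closure_of orbit (\<lambda>g. map_prod (act g) (act g)) (a, b))
      = prod_topology Q Q closure_of (proj2 ` orbit (\<lambda>g. map_prod (act g) (act g)) (a, b))"
    using assms
    by (intro image_closure_of_compact continuous_map_proj2 compact_prod pairs.orbit_subset_topspace)
      (auto simp: Hausdorff_Q Hausdorff_space_prod_topology)
  ultimately show ?thesis
    unfolding orbit_closure_def by simp
qed

lemma graph_closure_Q:
  "graph_closure Q K qa (proj x0) induced_semicocycle = (\<lambda>z. (proj (fst z), snd z)) ` F"
proof -
  have "continuous_map (prod_topology X K) (prod_topology Q K) (\<lambda>z. (proj (fst z), snd z))"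
    by (intro continuous_map_pairedI continuous_map_snd
        continuous_map_compose[OF continuous_map_fst continuous_map_proj, unfolded o_def])
  moreover have "compact_space (prod_topology X K)"
    using compact compact_K by (simp add: compact_space_prod_topology)
  moreover have "Hausdorff_space (prod_topology Q K)"
    using Hausdorff_Q Hausdorff_K by (simp add: Hausdorff_space_prod_topology)
  moreover have "(\<lambda>x. (x, f x)) ` orbit act x0 \<subseteq> topspace (prod_topology X K)"
    using orbit_subset_topspace[OF x0_in_topspace] continuous_map_image_subset_topspace[OF continuous_map_f]
    by (auto simp: Int_absorb1)
  ultimately have "(\<lambda>z. (proj (fst z), snd z)) ` F
      = prod_topology Q K closure_of ((\<lambda>z. (proj (fst z), snd z)) ` (\<lambda>x. (x, f x)) ` orbit act x0)"
    unfolding graph_closure_def by (rule image_closure_of_compact)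
  moreover have "(\<lambda>z. (proj (fst z), snd z)) ` (\<lambda>x. (x, f x)) ` orbit act x0
      = (\<lambda>c. (c, induced_semicocycle c)) ` orbit qa (proj x0)"
    unfolding orbit_proj_x0 image_image using induced_semicocycle_proj by simp
  ultimately show ?thesis
    unfolding graph_closure_def by simp
qed

lemma fiber_graph_closure_Q:
  assumes a: "a \<in> topspace X"
  shows "fiber (graph_closure Q K qa (proj x0) induced_semicocycle) (proj a) = fiber F a"
proof (intro equalityI subsetI)
  fix k assume "k \<in> fiber (graph_closure Q K qa (proj x0) induced_semicocycle) (proj a)"
  then obtain z where z: "(z, k) \<in> F" "proj z = proj a"
    unfolding fiber_def graph_closure_Q by force
  have "z \<in> topspace X"
    using z(1) closedin_subset[OF closedin_F] by auto
  then have "(z, a) \<in> sc_rel X K act x0 f"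
    using z(2) proj_eq_iff[OF _ a] by blast
  then have "fiber F z = fiber F a"
    by (rule fiber_eq_of_sc_rel)
  then show "k \<in> fiber F a"
    using z(1) unfolding fiber_def by blast
next
  fix k assume "k \<in> fiber F a"
  then show "k \<in> fiber (graph_closure Q K qa (proj x0) induced_semicocycle) (proj a)"
    unfolding fiber_def graph_closure_Q by force
qed

lemma no_rotation_induced: "no_rotation Q K qa (proj x0) induced_semicocycle"
proof -
  let ?FQ = "graph_closure Q K qa (proj x0) induced_semicocycle"
  have qa_in: "c \<in> topspace Q \<Longrightarrow> qa g c \<in> topspace Q" for g c
    using tds_Q unfolding tds_def by blast
  have "(c, d) \<in> fiber_relation Q qa ?FQ \<longleftrightarrow> (c, d) \<in> Id_on (topspace Q)" for c d
  proof (cases "c \<in> topspace Q \<and> d \<in> topspace Q")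
    case True
    then obtain a b where ab: "a \<in> topspace X" "c = proj a" "b \<in> topspace X" "d = proj b"
      by (metis topspace_QE)
    have fibers: "fiber ?FQ (proj p) = fiber F p" "fiber ?FQ (proj q) = fiber F q"
      if "(p, q) \<in> pair_orbit_closure a b" for p q
      using that pair_orbit_closure_subset fiber_graph_closure_Q by blast+
    have "(c, d) \<in> fiber_relation Q qa ?FQ \<longleftrightarrow>
        (\<forall>(p, q) \<in> proj2 ` pair_orbit_closure a b. fiber ?FQ p = fiber ?FQ q)"
      using True orbit_closure_Q_pair[OF ab(1,3)] ab(2,4) unfolding fiber_relation_def by simp
    also have "\<dots> \<longleftrightarrow> (\<forall>(p, q) \<in> pair_orbit_closure a b. fiber F p = fiber F q)"
      unfolding Ball_image_comp
    proof (rule ball_cong[OF refl])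
      fix z assume "z \<in> pair_orbit_closure a b"
      then show "((\<lambda>(p, q). fiber ?FQ p = fiber ?FQ q) \<circ> proj2) z
          \<longleftrightarrow> (case z of (p, q) \<Rightarrow> fiber F p = fiber F q)"
        using fibers by (cases z) simp
    qed
    also have "\<dots> \<longleftrightarrow> (a, b) \<in> sc_rel X K act x0 f"
      using ab unfolding sc_rel_eq fiber_relation_def by simp
    also have "\<dots> \<longleftrightarrow> c = d"
      using ab proj_eq_iff by simp
    finally show ?thesis
      using True by auto
  qed (auto simp: fiber_relation_def)
  moreover have "sc_rel Q K qa (proj x0) induced_semicocycle = fiber_relation Q qa ?FQ"
    by (rule sc_rel_eq_fiber_relation[of Q qa]) (simp_all add: compact_Q Hausdorff_Q qa_in)
  ultimately show ?thesis
    unfolding no_rotation_def by (simp add: set_eq_iff split_paired_all)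
qed

end

theorem mainTheorem6:
  fixes X :: "'a topology" and K :: "'k topology"
    and act :: "'g::topological_group_add \<Rightarrow> 'a \<Rightarrow> 'a"
    and x0 :: 'a and f :: "'a \<Rightarrow> 'k"
  assumes "tds X act" "minimal_action X act" "equicontinuous_action X act"
    and "compact_space K" "Hausdorff_space K"
    and "semicocycle X K act x0 f"
  shows "let R = sc_rel X K act x0 f; Q = quotient_topology X R;
             qa = quotient_action R act; c0 = R `` {x0} in
    tds Q qa \<and> minimal_action Q qa \<and> equicontinuous_action Q qa
    \<and> c0 \<in> topspace Q \<and> Q closure_of orbit qa c0 = topspace Q
    \<and> (\<exists>ft. (\<forall>g. ft (qa g c0) = f (act g x0))
           \<and> semicocycle Q K qa c0 ft \<and> no_rotation Q K qa c0 ft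
           \<and> shift_orbit_closure K (\<lambda>g. ft (qa g c0)) = shift_orbit_closure K (\<lambda>g. f (act g x0)))"
proof -
  interpret equicontinuous_system X act
    by (rule tds_imp_equicontinuous_system[OF assms(1,3)])
  interpret semicocycle_system X act K x0 f
    using assms(1,2,4-6) by unfold_locales (auto simp: tds_def)
  have minimal_Q: "minimal_action Q qa"
    by (rule minimal_action_Q[OF minimal])
  have c0: "proj x0 \<in> topspace Q"
    by (rule proj_in_topspace[OF x0_in_topspace])
  have "(\<lambda>g. induced_semicocycle (qa g (proj x0))) = (\<lambda>g. f (act g x0))"
    using induced_semicocycle_orbit by simp
  then show ?thesis
    unfolding Let_def
    using tds_Q minimal_Q equicontinuous_Q c0 minimal_Q[unfolded minimal_action_def]
      induced_semicocycle_orbit semicocycle_induced no_rotation_induced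
    by (intro conjI exI[where x=induced_semicocycle]) auto
qed

end
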